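(* Let there be $k$ bidders and $n$ items, bidder $i$ having additive valuation with private values $v_{ij}\ge0$ drawn from publicly known independent distributions. Let $s^*=\mathbb{E}[\sum_j\max_i v_{ij}]$ and define the reserve-welfare mechanism: set the reserve welfare $\hat s=(1-\epsilon)s^*$; given bids $b_{ij}$, if $\sum_j\max_i b_{ij}<\hat s$ then no item is allocated and nobody pays; otherwise allocate the items according to an allocation $(S_1,\dots,S_k)$ (disjoint sets of items) maximizing $\sum_i\sum_{j\in S_i}b_{ij}$ and charge each bidder $i$ the price $p_i=\hat s-\sum_{\ell\ne i}\sum_{j\in S_\ell}b_{\ell j}$. If $\sum_j\max_i v_{ij}$ is $(\epsilon,\delta)$-concentrated for constants $\frac13>\epsilon>0$ and $1>\delta>0$, then the reserve-welfare mechanism is deterministically truthful, individually rational, and its expected revenue is at least $(1-k\epsilon-k\delta)\,s^*$.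
   Context: A random variable $X$ is $(\epsilon,\delta)$-concentrated if $X\in((1-\epsilon)\mathbb{E}[X],(1+\epsilon)\mathbb{E}[X])$ with probability at least $1-\delta$. Bidder $i$'s utility is $\sum_{j\in S_i}v_{ij}-p_i$ (zero if nothing is allocated and nothing paid). Deterministically truthful: for every $i$ and every bids of the others, reporting $v_i$ maximizes bidder $i$'s utility. Individually rational: truthful reporting always gives nonnegative utility. Expected revenue: $\mathbb{E}[\sum_i p_i]$ under truthful bidding. *)

theory Defs
  imports "HOL-Probability.Probability"
begin

text \<open>Bidders are 0..k-1, items are 0..n-1. A bid (or value) profile is
  b :: nat => nat => real, where b i j is bidder i's bid for item j.
  An allocation assigns to each bidder i a set S i of items.\<close>

type_synonym profile = "nat \<Rightarrow> nat \<Rightarrow> real"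

definition valid_bids :: "nat \<Rightarrow> nat \<Rightarrow> profile \<Rightarrow> bool" where
  "valid_bids k n b \<longleftrightarrow> (\<forall>i<k. \<forall>j<n. 0 \<le> b i j)"

definition sum_max :: "nat \<Rightarrow> nat \<Rightarrow> profile \<Rightarrow> real" where
  "sum_max k n b = (\<Sum>j<n. Max ((\<lambda>i. b i j) ` {..<k}))"

definition is_allocation :: "nat \<Rightarrow> nat \<Rightarrow> (nat \<Rightarrow> nat set) \<Rightarrow> bool" where
  "is_allocation k n S \<longleftrightarrow> (\<forall>i<k. S i \<subseteq> {..<n}) \<and>
     (\<forall>i<k. \<forall>l<k. i \<noteq> l \<longrightarrow> S i \<inter> S l = {})"

definition alloc_welfare :: "nat \<Rightarrow> profile \<Rightarrow> (nat \<Rightarrow> nat set) \<Rightarrow> real" where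
  "alloc_welfare k b S = (\<Sum>i<k. \<Sum>j\<in>S i. b i j)"

definition optimal_allocation :: "nat \<Rightarrow> nat \<Rightarrow> profile \<Rightarrow> (nat \<Rightarrow> nat set) \<Rightarrow> bool" where
  "optimal_allocation k n b S \<longleftrightarrow> is_allocation k n S \<and>
     (\<forall>S'. is_allocation k n S' \<longrightarrow> alloc_welfare k b S' \<le> alloc_welfare k b S)"

definition rw_allocation :: "nat \<Rightarrow> nat \<Rightarrow> real \<Rightarrow> (profile \<Rightarrow> nat \<Rightarrow> nat set) \<Rightarrow> profile \<Rightarrow> nat \<Rightarrow> nat set" where
  "rw_allocation k n r A b = (if sum_max k n b < r then (\<lambda>_. {}) else A b)"

definition rw_payment :: "nat \<Rightarrow> nat \<Rightarrow> real \<Rightarrow> (profile \<Rightarrow> nat \<Rightarrow> nat set) \<Rightarrow> profile \<Rightarrow> nat \<Rightarrow> real" where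
  "rw_payment k n r A b i = (if sum_max k n b < r then 0
      else r - (\<Sum>l\<in>{..<k} - {i}. \<Sum>j\<in>A b l. b l j))"

definition utility :: "(profile \<Rightarrow> nat \<Rightarrow> nat set) \<Rightarrow> (profile \<Rightarrow> nat \<Rightarrow> real) \<Rightarrow>
    (nat \<Rightarrow> real) \<Rightarrow> profile \<Rightarrow> nat \<Rightarrow> real" where
  "utility X P vi b i = (\<Sum>j\<in>X b i. vi j) - P b i"

definition deterministically_truthful :: "nat \<Rightarrow> nat \<Rightarrow> (profile \<Rightarrow> nat \<Rightarrow> nat set) \<Rightarrow>
    (profile \<Rightarrow> nat \<Rightarrow> real) \<Rightarrow> bool" where
  "deterministically_truthful k n X P \<longleftrightarrow>
     (\<forall>i<k. \<forall>vi b bi. (\<forall>j<n. 0 \<le> vi j) \<longrightarrow> (\<forall>j<n. 0 \<le> bi j) \<longrightarrow> valid_bids k n b \<longrightarrow>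
        utility X P vi (b(i := bi)) i \<le> utility X P vi (b(i := vi)) i)"

definition individually_rational :: "nat \<Rightarrow> nat \<Rightarrow> (profile \<Rightarrow> nat \<Rightarrow> nat set) \<Rightarrow>
    (profile \<Rightarrow> nat \<Rightarrow> real) \<Rightarrow> bool" where
  "individually_rational k n X P \<longleftrightarrow>
     (\<forall>i<k. \<forall>vi b. (\<forall>j<n. 0 \<le> vi j) \<longrightarrow> valid_bids k n b \<longrightarrow>
        0 \<le> utility X P vi (b(i := vi)) i)"

definition concentrated :: "'a measure \<Rightarrow> ('a \<Rightarrow> real) \<Rightarrow> real \<Rightarrow> real \<Rightarrow> bool" where
  "concentrated M X \<epsilon> \<delta> \<longleftrightarrow>
     1 - \<delta> \<le> measure M {\<omega>\<in>space M. (1 - \<epsilon>) * (\<integral>x. X x \<partial>M) < X \<omega> \<and> X \<omega> < (1 + \<epsilon>) * (\<integral>x. X x \<partial>M)}"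

end

theory Submission
  imports Defs
begin

text \<open>The mechanism is a VCG mechanism shifted by the reserve: with an optimal allocation,
  bidder \<open>i\<close>'s utility equals the total welfare of the allocation measured in its true values
  minus \<open>r\<close>, so truthfulness and individual rationality follow from welfare maximisation.
  On the event that the welfare \<open>W\<close> reaches the reserve, the payments sum to
  \<open>k r - (k - 1) W\<close>; concentration makes this event likely, and taking expectations gives
  revenue at least \<open>k r (1 - \<delta>) - (k - 1) s \<ge> (1 - k\<epsilon> - k\<delta>) s\<close>.\<close>

lemma Max_bids_ge:
  fixes k :: nat
  assumes "i < k"
  shows "b i j \<le> Max ((\<lambda>i. b i j) ` {..<k})"
  using assms by (intro Max_ge) auto

lemma Max_bids_nonneg:
  fixes k :: nat
  assumes "k \<ge> 1" "valid_bids k n b" "j < n"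
  shows "0 \<le> Max ((\<lambda>i. b i j) ` {..<k})"
proof -
  have "0 \<le> b 0 j" using assms unfolding valid_bids_def by simp
  also have "\<dots> \<le> Max ((\<lambda>i. b i j) ` {..<k})" using assms(1) by (intro Max_bids_ge) simp
  finally show ?thesis .
qed

lemma sum_max_nonneg:
  assumes "k \<ge> 1" "valid_bids k n b"
  shows "0 \<le> sum_max k n b"
  unfolding sum_max_def using Max_bids_nonneg[OF assms] by (auto intro: sum_nonneg)

lemma alloc_welfare_le_sum_max:
  assumes "k \<ge> 1" "valid_bids k n b" "is_allocation k n S"
  shows "alloc_welfare k b S \<le> sum_max k n b"
proof -
  define m where "m j = Max ((\<lambda>i. b i j) ` {..<k})" for j
  have fin: "finite (S i)" if "i < k" for i
    using assms(3) that unfolding is_allocation_def by (meson finite_lessThan finite_subset)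
  have "alloc_welfare k b S \<le> (\<Sum>i<k. \<Sum>j\<in>S i. m j)"
    unfolding alloc_welfare_def m_def by (intro sum_mono Max_bids_ge) auto
  also have "\<dots> = sum m (\<Union>i<k. S i)"
    using assms(3) fin unfolding is_allocation_def by (intro sum.UNION_disjoint[symmetric]) auto
  also have "\<dots> \<le> sum m {..<n}"
    using assms(3) unfolding is_allocation_def m_def
    by (intro sum_mono2 Max_bids_nonneg[OF assms(1,2)]) auto
  finally show ?thesis unfolding sum_max_def m_def .
qed

text \<open>Giving every item to a highest bidder attains \<open>sum_max\<close>.\<close>

lemma ex_allocation_welfare_eq_sum_max:
  assumes "k \<ge> 1"
  shows "\<exists>S. is_allocation k n S \<and> alloc_welfare k b S = sum_max k n b"
proof -
  define m where "m j = Max ((\<lambda>i. b i j) ` {..<k})" for j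
  have "\<exists>i. i < k \<and> b i j = m j" for j
  proof -
    have "m j \<in> (\<lambda>i. b i j) ` {..<k}"
      unfolding m_def using assms by (intro Max_in) (auto simp: lessThan_empty_iff)
    then show ?thesis by auto
  qed
  then obtain g where g: "\<And>j. g j < k \<and> b (g j) j = m j" by metis
  define S where "S i = {j \<in> {..<n}. g j = i}" for i
  have "alloc_welfare k b S = (\<Sum>i<k. \<Sum>j\<in>S i. m j)"
    unfolding alloc_welfare_def S_def using g by (intro sum.cong refl) auto
  also have "\<dots> = sum m {..<n}"
    unfolding S_def by (rule sum.group) (use g in auto)
  finally have "alloc_welfare k b S = sum_max k n b" unfolding sum_max_def m_def .
  moreover have "is_allocation k n S" unfolding is_allocation_def S_def by auto
  ultimately show ?thesis by blast
qed

lemma optimal_allocation_welfare: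
  assumes "k \<ge> 1" "valid_bids k n b" "optimal_allocation k n b S"
  shows "alloc_welfare k b S = sum_max k n b"
  using alloc_welfare_le_sum_max[OF assms(1,2)] ex_allocation_welfare_eq_sum_max[OF assms(1), of n b]
    assms(3) unfolding optimal_allocation_def by (metis order_antisym)

lemma rw_utility_eq:
  assumes "i < k"
  shows "utility (rw_allocation k n r A) (rw_payment k n r A) vi (b(i := x)) i =
    (if sum_max k n (b(i := x)) < r then 0
     else alloc_welfare k (b(i := vi)) (A (b(i := x))) - r)"
proof -
  have "alloc_welfare k (b(i := vi)) (A (b(i := x))) = (\<Sum>j\<in>A (b(i := x)) i. vi j)
      + (\<Sum>l\<in>{..<k} - {i}. \<Sum>j\<in>A (b(i := x)) l. (b(i := x)) l j)"
    unfolding alloc_welfare_def using assms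
    by (subst sum.remove[of _ i]) (auto intro!: sum.cong)
  then show ?thesis unfolding utility_def rw_allocation_def rw_payment_def by auto
qed

text \<open>Truthful reporting yields utility \<open>max 0 (W - r)\<close> for the welfare \<open>W\<close> at the true
  values, while any report yields \<open>0\<close> or at most \<open>W - r\<close>.\<close>

lemma rw_utility_truthful:
  assumes "k \<ge> 1" "\<forall>b. valid_bids k n b \<longrightarrow> optimal_allocation k n b (A b)"
    and "i < k" "\<forall>j<n. 0 \<le> vi j" "\<forall>j<n. 0 \<le> x j" "valid_bids k n b"
  shows "utility (rw_allocation k n r A) (rw_payment k n r A) vi (b(i := x)) i
      \<le> utility (rw_allocation k n r A) (rw_payment k n r A) vi (b(i := vi)) i"
    and "0 \<le> utility (rw_allocation k n r A) (rw_payment k n r A) vi (b(i := vi)) i"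
proof -
  have valid_true: "valid_bids k n (b(i := vi))" and valid_report: "valid_bids k n (b(i := x))"
    using assms(4-6) unfolding valid_bids_def by auto
  have "alloc_welfare k (b(i := vi)) (A (b(i := vi))) = sum_max k n (b(i := vi))"
    using optimal_allocation_welfare[OF assms(1) valid_true] assms(2) valid_true by blast
  moreover have "alloc_welfare k (b(i := vi)) (A (b(i := x))) \<le> sum_max k n (b(i := vi))"
    using assms(2) valid_report unfolding optimal_allocation_def
    by (intro alloc_welfare_le_sum_max[OF assms(1) valid_true]) blast
  ultimately show "utility (rw_allocation k n r A) (rw_payment k n r A) vi (b(i := x)) i
      \<le> utility (rw_allocation k n r A) (rw_payment k n r A) vi (b(i := vi)) i"
    and "0 \<le> utility (rw_allocation k n r A) (rw_payment k n r A) vi (b(i := vi)) i"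
    unfolding rw_utility_eq[OF assms(3)] by auto
qed

lemma rw_deterministically_truthful:
  assumes "k \<ge> 1" "\<forall>b. valid_bids k n b \<longrightarrow> optimal_allocation k n b (A b)"
  shows "deterministically_truthful k n (rw_allocation k n r A) (rw_payment k n r A)"
  unfolding deterministically_truthful_def using rw_utility_truthful(1)[OF assms] by blast

lemma rw_individually_rational:
  assumes "k \<ge> 1" "\<forall>b. valid_bids k n b \<longrightarrow> optimal_allocation k n b (A b)"
  shows "individually_rational k n (rw_allocation k n r A) (rw_payment k n r A)"
  unfolding individually_rational_def using rw_utility_truthful(2)[OF assms, of _ _ "\<lambda>_. 0"] by auto

lemma rw_payment_sum:
  assumes "k \<ge> 1" "valid_bids k n b" "optimal_allocation k n b (A b)"
  shows "(\<Sum>i<k. rw_payment k n r A b i) =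
    (if r \<le> sum_max k n b then real k * r - (real k - 1) * sum_max k n b else 0)"
proof (cases "sum_max k n b < r")
  case True
  then show ?thesis unfolding rw_payment_def by auto
next
  case False
  define w where "w l = (\<Sum>j\<in>A b l. b l j)" for l
  have total: "sum w {..<k} = sum_max k n b"
    using optimal_allocation_welfare[OF assms] unfolding w_def alloc_welfare_def .
  have "(\<Sum>i<k. rw_payment k n r A b i) = (\<Sum>i<k. r - (sum_max k n b - w i))"
  proof (intro sum.cong refl)
    fix i assume "i \<in> {..<k}"
    then have "sum w ({..<k} - {i}) = sum_max k n b - w i" by (simp add: sum_diff1 total)
    then show "rw_payment k n r A b i = r - (sum_max k n b - w i)"
      using False unfolding rw_payment_def w_def by auto
  qed
  also have "\<dots> = real k * r - (real k - 1) * sum_max k n b"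
    using total by (simp add: sum_subtractf sum.distrib algebra_simps)
  finally show ?thesis using False by simp
qed

context prob_space
begin

lemma expectation_reserve_revenue_ge:
  fixes W :: "'a \<Rightarrow> real"
  assumes "integrable M W" "\<forall>\<omega>\<in>space M. 0 \<le> W \<omega>"
    and "0 \<le> r" "1 \<le> c"
    and "E \<in> events" "1 - \<delta> \<le> prob E" "\<forall>\<omega>\<in>E. r \<le> W \<omega>"
  shows "c * r * (1 - \<delta>) - (c - 1) * expectation W
      \<le> (\<integral>\<omega>. (if r \<le> W \<omega> then c * r - (c - 1) * W \<omega> else 0) \<partial>M)"
proof -
  define f where "f \<omega> = (if r \<le> W \<omega> then c * r - (c - 1) * W \<omega> else 0)" for \<omega>
  define g where "g \<omega> = c * r * indicator E \<omega> - (c - 1) * W \<omega>" for \<omega>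
  have W_meas[measurable]: "W \<in> borel_measurable M"
    using assms(1) by auto
  have f_eq: "f \<omega> = (c * r - (c - 1) * W \<omega>) * indicator {\<omega>\<in>space M. r \<le> W \<omega>} \<omega>"
    if "\<omega> \<in> space M" for \<omega>
    using that unfolding f_def by (simp add: indicator_def)
  have "integrable M (\<lambda>\<omega>. (c * r - (c - 1) * W \<omega>) * indicator {\<omega>\<in>space M. r \<le> W \<omega>} \<omega>)"
    using assms(1) by (intro integrable_real_mult_indicator) auto
  moreover have "integrable M f \<longleftrightarrow>
      integrable M (\<lambda>\<omega>. (c * r - (c - 1) * W \<omega>) * indicator {\<omega>\<in>space M. r \<le> W \<omega>} \<omega>)"
    using f_eq by (intro Bochner_Integration.integrable_cong) auto
  ultimately have f_int: "integrable M f" by simp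
  have indicator_int: "integrable M (\<lambda>\<omega>. c * r * indicator E \<omega>)"
    using assms(5) by (intro integrable_mult_right integrable_real_indicator) (auto simp: less_top[symmetric])
  have g_int: "integrable M g"
    unfolding g_def using indicator_int assms(1) by auto
  \<comment> \<open>\<open>g \<le> f\<close> because \<open>E\<close> forces \<open>r \<le> W\<close>, and off \<open>{r \<le> W}\<close> only the nonpositive term remains.\<close>
  have "g \<omega> \<le> f \<omega>" if "\<omega> \<in> space M" for \<omega>
  proof -
    have "0 \<le> (c - 1) * W \<omega>" using assms(2,4) that by simp
    then show ?thesis
      using assms(3,4,7) unfolding f_def g_def by (auto simp: indicator_def)
  qed
  then have "integral\<^sup>L M g \<le> integral\<^sup>L M f"
    by (intro integral_mono_AE g_int f_int) auto
  moreover have "integral\<^sup>L M g = c * r * prob E - (c - 1) * expectation W"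
    unfolding g_def using indicator_int assms(1,5) by simp
  moreover have "c * r * (1 - \<delta>) \<le> c * r * prob E"
    using assms(3,4,6) by (intro mult_left_mono) auto
  ultimately show ?thesis unfolding f_def by linarith
qed

end

theorem theorem7:
  fixes M :: "'a measure" and V :: "nat \<Rightarrow> nat \<Rightarrow> 'a \<Rightarrow> real"
    and k n :: nat and \<epsilon> \<delta> :: real
    and A :: "profile \<Rightarrow> nat \<Rightarrow> nat set"
  assumes "prob_space M"
    and "k \<ge> 1"
    and "prob_space.indep_vars M (\<lambda>_. borel) (\<lambda>(i, j). V i j) ({..<k} \<times> {..<n})"
    and "\<forall>i<k. \<forall>j<n. \<forall>\<omega>\<in>space M. 0 \<le> V i j \<omega>"
    and "integrable M (\<lambda>\<omega>. sum_max k n (\<lambda>i j. V i j \<omega>))"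
    and "0 < \<epsilon>" and "\<epsilon> < 1/3" and "0 < \<delta>" and "\<delta> < 1"
    and "concentrated M (\<lambda>\<omega>. sum_max k n (\<lambda>i j. V i j \<omega>)) \<epsilon> \<delta>"
    and "\<forall>b. valid_bids k n b \<longrightarrow> optimal_allocation k n b (A b)"
  defines "s \<equiv> \<integral>\<omega>. sum_max k n (\<lambda>i j. V i j \<omega>) \<partial>M"
    and "r \<equiv> (1 - \<epsilon>) * (\<integral>\<omega>. sum_max k n (\<lambda>i j. V i j \<omega>) \<partial>M)"
  shows "deterministically_truthful k n (rw_allocation k n r A) (rw_payment k n r A)
       \<and> individually_rational k n (rw_allocation k n r A) (rw_payment k n r A)
       \<and> (\<integral>\<omega>. (\<Sum>i<k. rw_payment k n r A (\<lambda>i j. V i j \<omega>) i) \<partial>M)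
            \<ge> (1 - real k * \<epsilon> - real k * \<delta>) * s"
proof -
  interpret prob_space M by fact
  define W where "W \<omega> = sum_max k n (\<lambda>i j. V i j \<omega>)" for \<omega>
  define E where "E = {\<omega>\<in>space M. (1 - \<epsilon>) * s < W \<omega> \<and> W \<omega> < (1 + \<epsilon>) * s}"
  have valid: "valid_bids k n (\<lambda>i j. V i j \<omega>)" if "\<omega> \<in> space M" for \<omega>
    using assms(4) that unfolding valid_bids_def by auto
  have W_nonneg: "\<forall>\<omega>\<in>space M. 0 \<le> W \<omega>"
    unfolding W_def using sum_max_nonneg[OF assms(2) valid] by blast
  have W_int: "integrable M W" using assms(5) unfolding W_def .
  then have [measurable]: "W \<in> borel_measurable M" by auto
  have s_eq: "s = expectation W" unfolding s_def W_def ..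
  have s_nonneg: "0 \<le> s" unfolding s_eq using W_nonneg by simp
  have r_eq: "r = (1 - \<epsilon>) * s" unfolding r_def s_def ..
  have "(\<integral>\<omega>. (\<Sum>i<k. rw_payment k n r A (\<lambda>i j. V i j \<omega>) i) \<partial>M)
      = (\<integral>\<omega>. (if r \<le> W \<omega> then real k * r - (real k - 1) * W \<omega> else 0) \<partial>M)"
    unfolding W_def using rw_payment_sum[OF assms(2) valid] assms(11) valid
    by (intro Bochner_Integration.integral_cong) auto
  also have "\<dots> \<ge> real k * r * (1 - \<delta>) - (real k - 1) * s"
    unfolding s_eq
  proof (rule expectation_reserve_revenue_ge[OF W_int W_nonneg _ _ _ _])
    show "E \<in> events" unfolding E_def by measurable
    show "1 - \<delta> \<le> prob E"
      using assms(10) unfolding concentrated_def E_def W_def s_def by simp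
    show "\<forall>\<omega>\<in>E. r \<le> W \<omega>" unfolding E_def r_eq by auto
  qed (use assms(2,7) s_nonneg r_eq in auto)
  moreover have "real k * r * (1 - \<delta>) - (real k - 1) * s
      = (1 - real k * \<epsilon> - real k * \<delta>) * s + real k * \<epsilon> * \<delta> * s"
    unfolding r_eq by (simp add: algebra_simps)
  moreover have "0 \<le> real k * \<epsilon> * \<delta> * s" using assms(6,8) s_nonneg by simp
  ultimately have "(1 - real k * \<epsilon> - real k * \<delta>) * s
      \<le> (\<integral>\<omega>. (\<Sum>i<k. rw_payment k n r A (\<lambda>i j. V i j \<omega>) i) \<partial>M)"
    by linarith
  then show ?thesis
    using rw_deterministically_truthful[OF assms(2,11)] rw_individually_rational[OF assms(2,11)]
    by blast
qed

end
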